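(* Let $f,\ell,\hat\ell\in\mathbb{C}[X]$ with $r:=\deg(f)>1$ and $\ell,\hat\ell$ linear, and let $n\ge 2$ be an integer. (1) If $f^{\circ n}=\ell\circ X^{r^n}\circ\hat\ell$, then $f(X)=\ell\big(\alpha\,(\ell^{\circ(-1)}(X))^r\big)$ for some $\alpha\in\mathbb{C}^*$, i.e. $f=\ell\circ\alpha X^r\circ\ell^{\circ(-1)}$. (2) If $f^{\circ n}=\ell\circ T_{r^n}\circ\hat\ell$ and $(r,n)\ne(2,2)$, then $f(X)=\ell\big(T_r(\epsilon\,\ell^{\circ(-1)}(X))\big)$ for some $\epsilon\in\{1,-1\}$.
   Context: $f^{\circ n}$ denotes the $n$-th iterate of $f$ under composition. A linear polynomial has degree exactly $1$; $\ell^{\circ(-1)}$ is its compositional inverse. $T_m$ is the Chebyshev polynomial defined by $T_m(X+X^{-1})=X^m+X^{-m}$. *)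

theory Defs
  imports "HOL-Computational_Algebra.Polynomial"
begin

definition piter :: "nat \<Rightarrow> 'a::comm_ring_1 poly \<Rightarrow> 'a poly" where
  "piter n f = ((\<lambda>g. pcompose f g) ^^ n) [:0, 1:]"

definition linv :: "'a::field poly \<Rightarrow> 'a poly" where
  "linv l = (THE m. pcompose l m = [:0, 1:] \<and> pcompose m l = [:0, 1:])"

text \<open>Chebyshev (Dickson-normalised) polynomial: T_m(X + X^-1) = X^m + X^-m.\<close>
definition cheb :: "nat \<Rightarrow> complex poly" where
  "cheb m = (THE p. \<forall>z::complex. z \<noteq> 0 \<longrightarrow> poly p (z + inverse z) = z ^ m + inverse z ^ m)"

end

theory Submission
  imports Defs "HOL-Computational_Algebra.Fundamental_Theorem_Algebra"
begin

(*
  Conjugating by the linear polynomial l, g = l^-1 o f o l, reduces both parts to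
  l = X: the hypothesis becomes g^n = Lambda^(r^n), resp. g^n = T_(r^n) o Lambda, with
  Lambda = lh o l linear, and the claim becomes g = alpha X^r, resp. g = T_r(eps X).

  Power case: g o g^(n-1) = Lambda^N vanishes only at the root x0 of Lambda, so
  g = c (X - y0)^r and g^(n-1) - y0 = d (X - x0)^M.  A root of g^(n-2) - y0 is a
  critical point of g^(n-1) = c (g^(n-2) - y0)^r, hence equals x0, forcing y0 = 0.

  Chebyshev case: P = T_N o Lambda satisfies (Lambda^2 - 4) P'^2 = K (P^2 - 4), and
  +-T_d is the only polynomial solution of degree d of the Chebyshev equation.
  Hence A o B = T_N o Lambda implies A = +-T_a o mu with mu linear (outer rigidity:
  A'^2 divides A^2 - 4 with a quadratic quotient having distinct roots) and
  mu o B = +-T_b o Lambda (inner rigidity).  Applied to g o g^(n-1) and g^(n-1) o g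
  this gives a linear relation between two linear twists of T_M, M = r^(n-1) >= 3,
  which forces mu = +-X by comparing the top three coefficients.  The sign case
  g = -T_r with r even is excluded because then g^n = -T_N.
*)

section \<open>Chebyshev polynomials\<close>

fun chebT :: "nat \<Rightarrow> complex poly" where
  "chebT 0 = [:2:]"
| "chebT (Suc 0) = [:0, 1:]"
| "chebT (Suc (Suc n)) = [:0, 1:] * chebT (Suc n) - chebT n"

fun chebU :: "nat \<Rightarrow> complex poly" where
  "chebU 0 = 0"
| "chebU (Suc 0) = 1"
| "chebU (Suc (Suc n)) = [:0, 1:] * chebU (Suc n) - chebU n"

lemma numeral_2_mult_poly:
  "(2::'a::comm_ring_1 poly) * p = smult 2 p" "p * (2::'a poly) = smult 2 p"
  by (simp_all add: numeral_poly)

text \<open>The common induction step for T and U on the Joukowski circle: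
  z^k + s z^-k satisfies the recurrence of both.\<close>
lemma joukowski_recurrence:
  fixes z u s :: complex
  assumes "z * u = 1"
  shows "(z + u) * (z ^ Suc n + s * u ^ Suc n) - (z ^ n + s * u ^ n)
           = z ^ Suc (Suc n) + s * u ^ Suc (Suc n)"
proof -
  have "(z + u) * (z * A + s * (u * B)) - (A + s * B) = z * (z * A) + s * (u * (u * B))" for A B
    using assms by algebra
  then show ?thesis by simp
qed

lemma chebT_joukowski:
  "z \<noteq> 0 \<Longrightarrow> poly (chebT m) (z + inverse z) = z ^ m + inverse z ^ m"
proof (induction m rule: chebT.induct)
  case (3 n)
  have "poly (chebT (Suc (Suc n))) (z + inverse z)
      = (z + inverse z) * (z ^ Suc n + 1 * inverse z ^ Suc n) - (z ^ n + 1 * inverse z ^ n)"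
    using 3 by simp
  also have "\<dots> = z ^ Suc (Suc n) + 1 * inverse z ^ Suc (Suc n)"
    by (rule joukowski_recurrence) (use 3 in simp)
  finally show ?case by simp
qed simp_all

lemma chebU_joukowski:
  "z \<noteq> 0 \<Longrightarrow> poly (chebU m) (z + inverse z) * (z - inverse z) = z ^ m - inverse z ^ m"
proof (induction m rule: chebU.induct)
  case (3 n)
  have "poly (chebU (Suc (Suc n))) (z + inverse z) * (z - inverse z)
      = (z + inverse z) * (poly (chebU (Suc n)) (z + inverse z) * (z - inverse z))
        - poly (chebU n) (z + inverse z) * (z - inverse z)"
    by (simp add: algebra_simps)
  also have "\<dots> = (z + inverse z) * (z ^ Suc n + (-1) * inverse z ^ Suc n) - (z ^ n + (-1) * inverse z ^ n)"
    using 3 by simp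
  also have "\<dots> = z ^ Suc (Suc n) + (-1) * inverse z ^ Suc (Suc n)"
    by (rule joukowski_recurrence) (use 3 in simp)
  finally show ?case by simp
qed simp_all

lemma joukowski_surj: "\<exists>z::complex. z \<noteq> 0 \<and> w = z + inverse z"
proof -
  define s where "s = csqrt (w\<^sup>2 - 4)"
  have s2: "s\<^sup>2 = w\<^sup>2 - 4" unfolding s_def by simp
  define z where "z = (w + s) / 2"
  have prod: "z * (w - z) = 1" unfolding z_def using s2 by (simp add: field_simps power2_eq_square)
  then have "z \<noteq> 0" by auto
  moreover have "inverse z = w - z" using prod \<open>z \<noteq> 0\<close> by (simp add: field_simps)
  ultimately show ?thesis by (intro exI[of _ z]) auto
qed

lemma poly_eqI_joukowski:
  assumes "\<And>z::complex. z \<noteq> 0 \<Longrightarrow> poly p (z + inverse z) = poly q (z + inverse z)"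
  shows "p = q"
proof -
  have "poly p w = poly q w" for w
    using joukowski_surj[of w] assms by auto
  then show ?thesis by (simp add: poly_eq_poly_eq_iff fun_eq_iff flip: poly_eq_poly_eq_iff)
qed

lemma cheb_eq_chebT: "cheb m = chebT m"
  unfolding cheb_def
proof (rule the_equality)
  fix p assume "\<forall>z::complex. z \<noteq> 0 \<longrightarrow> poly p (z + inverse z) = z ^ m + inverse z ^ m"
  then show "p = chebT m" by (intro poly_eqI_joukowski) (simp add: chebT_joukowski)
qed (use chebT_joukowski in blast)

lemma chebT_compose: "pcompose (chebT a) (chebT b) = chebT (a * b)"
proof (rule poly_eqI_joukowski)
  fix z :: complex assume z: "z \<noteq> 0"
  have "poly (pcompose (chebT a) (chebT b)) (z + inverse z) = poly (chebT a) (z ^ b + inverse (z ^ b))"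
    using z by (simp add: poly_pcompose chebT_joukowski power_inverse)
  also have "\<dots> = (z ^ b) ^ a + inverse (z ^ b) ^ a" using z by (simp add: chebT_joukowski)
  also have "\<dots> = z ^ (a * b) + inverse z ^ (a * b)"
    by (simp add: power_inverse mult.commute flip: power_mult)
  finally show "poly (pcompose (chebT a) (chebT b)) (z + inverse z) = poly (chebT (a * b)) (z + inverse z)"
    using z by (simp add: chebT_joukowski)
qed

lemma chebT_reflect: "pcompose (chebT m) [:0, -1:] = smult ((-1) ^ m) (chebT m)"
proof (rule poly_eqI_joukowski)
  fix z :: complex assume z: "z \<noteq> 0"
  have "poly (pcompose (chebT m) [:0, -1:]) (z + inverse z) = poly (chebT m) ((-z) + inverse (-z))"
    by (simp add: poly_pcompose)
  also have "\<dots> = (-z) ^ m + inverse (-z) ^ m" using z by (intro chebT_joukowski) simp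
  also have "\<dots> = (-1) ^ m * (z ^ m + inverse z ^ m)"
    by (simp add: power_minus' field_simps power_inverse)
  finally show "poly (pcompose (chebT m) [:0, -1:]) (z + inverse z)
              = poly (smult ((-1) ^ m) (chebT m)) (z + inverse z)"
    using z by (simp add: chebT_joukowski)
qed

lemma chebT_scale_sign:
  "c = 1 \<or> c = -1 \<Longrightarrow> pcompose (chebT k) [:0, c:] = smult (c ^ k) (chebT k)"
  using chebT_reflect[of k] by auto

lemma chebT_pell: "chebT m ^ 2 - 4 = [:-4, 0, 1:] * chebU m ^ 2"
proof (rule poly_eqI_joukowski)
  fix z :: complex assume z: "z \<noteq> 0"
  define u where "u = inverse z"
  have zu: "z * u = 1" using z unfolding u_def by simp
  have U: "poly (chebU m) (z + u) * (z - u) = z ^ m - u ^ m"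
    using chebU_joukowski z unfolding u_def by simp
  have zum: "z ^ m * u ^ m = 1" using zu by (metis power_mult_distrib power_one)
  have "(z ^ m + u ^ m)\<^sup>2 - 4 = (z ^ m - u ^ m)\<^sup>2"
    using zum by (simp add: power2_eq_square algebra_simps)
  also have "\<dots> = (poly (chebU m) (z + u))\<^sup>2 * ((z + u)\<^sup>2 - 4)"
  proof -
    have "(z - u)\<^sup>2 = (z + u)\<^sup>2 - 4" using zu by (simp add: power2_eq_square algebra_simps)
    then show ?thesis unfolding U[symmetric] by (simp add: power_mult_distrib)
  qed
  moreover have "poly (chebT m ^ 2 - 4) (z + u) = (z ^ m + u ^ m)\<^sup>2 - 4"
    using z by (simp add: chebT_joukowski u_def)
  moreover have "poly ([:-4, 0, 1:] * chebU m ^ 2) (z + u) = (poly (chebU m) (z + u))\<^sup>2 * ((z + u)\<^sup>2 - 4)"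
    by (simp add: algebra_simps power2_eq_square)
  ultimately show "poly (chebT m ^ 2 - 4) (z + inverse z) = poly ([:-4, 0, 1:] * chebU m ^ 2) (z + inverse z)"
    unfolding u_def by simp
qed

lemma chebT_chebU:
  "chebT (Suc m) = chebU (Suc (Suc m)) - chebU m \<and>
   chebT (Suc (Suc m)) = chebU (Suc (Suc (Suc m))) - chebU (Suc m)"
proof (induction m)
  case 0 then show ?case by (simp add: numeral_poly)
next
  case (Suc m)
  have "chebT (Suc (Suc (Suc m))) = [:0, 1:] * chebT (Suc (Suc m)) - chebT (Suc m)"
    by (simp only: chebT.simps)
  also have "\<dots> = [:0, 1:] * (chebU (Suc (Suc (Suc m))) - chebU (Suc m)) - (chebU (Suc (Suc m)) - chebU m)"
    using Suc by (simp del: chebU.simps chebT.simps)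
  also have "\<dots> = ([:0, 1:] * chebU (Suc (Suc (Suc m))) - chebU (Suc (Suc m)))
                 - ([:0, 1:] * chebU (Suc m) - chebU m)"
    by (simp only: algebra_simps)
  also have "\<dots> = chebU (Suc (Suc (Suc (Suc m)))) - chebU (Suc (Suc m))"
    by (simp only: chebU.simps)
  finally show ?case using Suc by blast
qed

text \<open>T_m' = m U_m (stated for two consecutive indices to make the induction go through).\<close>
lemma pderiv_chebT_pair:
  "pderiv (chebT m) = smult (of_nat m) (chebU m) \<and>
   pderiv (chebT (Suc m)) = smult (of_nat (Suc m)) (chebU (Suc m))"
proof (induction m)
  case 0 then show ?case by (simp add: pderiv_pCons)
next
  case (Suc m)
  have "pderiv (chebT (Suc (Suc m))) = chebT (Suc m) + [:0, 1:] * pderiv (chebT (Suc m)) - pderiv (chebT m)"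
    by (simp add: pderiv_mult pderiv_diff pderiv_pCons algebra_simps)
  also have "\<dots> = chebT (Suc m) + smult (of_nat (Suc m)) ([:0, 1:] * chebU (Suc m)) - smult (of_nat m) (chebU m)"
    using Suc by (simp del: chebU.simps chebT.simps)
  also have "\<dots> = chebU (Suc (Suc m)) - chebU m + smult (of_nat (Suc m)) (chebU (Suc (Suc m)) + chebU m)
                 - smult (of_nat m) (chebU m)"
    using chebT_chebU[of m] by (simp only: chebU.simps) simp
  also have "\<dots> = smult (of_nat (Suc (Suc m))) (chebU (Suc (Suc m)))"
    by (simp add: algebra_simps smult_add_left smult_add_right numeral_2_mult_poly
             del: chebU.simps chebT.simps)
  finally show ?case using Suc by simp
qed

lemma pderiv_chebT: "pderiv (chebT m) = smult (of_nat m) (chebU m)"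
  using pderiv_chebT_pair by blast

lemma chebT_top_coeffs:
  "degree (chebT m) = m \<and> coeff (chebT m) m = (if m = 0 then 2 else 1) \<and>
   (m \<ge> 1 \<longrightarrow> coeff (chebT m) (m - 1) = 0) \<and> (m \<ge> 2 \<longrightarrow> coeff (chebT m) (m - 2) = - of_nat m)"
proof (induction m rule: chebT.induct)
  case (3 n)
  have rec: "chebT (Suc (Suc n)) = pCons 0 (chebT (Suc n)) - chebT n" by simp
  have lead: "coeff (chebT (Suc (Suc n))) (Suc (Suc n)) = 1"
    unfolding rec using 3 by (simp add: coeff_eq_0)
  have "degree (chebT (Suc (Suc n))) \<le> Suc (Suc n)"
    unfolding rec using 3 by (intro degree_diff_le) (auto simp: degree_pCons_eq_if)
  then have deg: "degree (chebT (Suc (Suc n))) = Suc (Suc n)"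
    using lead by (metis le_antisym le_degree one_neq_zero)
  have sub1: "coeff (chebT (Suc (Suc n))) (Suc n) = 0"
    unfolding rec using 3 by (simp add: coeff_eq_0)
  have sub2: "coeff (chebT (Suc (Suc n))) n = - of_nat (Suc (Suc n))"
  proof (cases n)
    case (Suc k)
    have "coeff (chebT (Suc (Suc n))) n = coeff (chebT (Suc n)) k - coeff (chebT n) n"
      unfolding rec Suc by simp
    also have "\<dots> = - of_nat (Suc n) - 1" using 3 Suc by auto
    finally show ?thesis by simp
  qed simp
  show ?case using deg lead sub1 sub2 by simp
qed simp_all

lemma degree_chebT [simp]: "degree (chebT m) = m"
  using chebT_top_coeffs by blast

lemma lead_coeff_chebT: "m \<ge> 1 \<Longrightarrow> coeff (chebT m) m = 1"
  using chebT_top_coeffs[of m] by simp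

lemma coeff_chebT_sub1: "m \<ge> 1 \<Longrightarrow> coeff (chebT m) (m - 1) = 0"
  using chebT_top_coeffs[of m] by simp

lemma coeff_chebT_sub2: "m \<ge> 2 \<Longrightarrow> coeff (chebT m) (m - 2) = - of_nat m"
  using chebT_top_coeffs[of m] by simp

lemma chebT_ode: "[:-4, 0, 1:] * (pderiv (chebT m))\<^sup>2 = smult (of_nat (m\<^sup>2)) (chebT m ^ 2 - 4)"
proof -
  have "(pderiv (chebT m))\<^sup>2 = smult (of_nat (m\<^sup>2)) (chebU m ^ 2)"
    by (simp add: pderiv_chebT power2_eq_square)
  then show ?thesis using chebT_pell[of m] by (simp add: mult_smult_right)
qed

lemma pcompose_idL [simp]: "pcompose [:0, 1:] (p::'a::comm_ring_1 poly) = p"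
  by (simp add: pcompose_pCons)

lemma pcompose_linear: "pcompose [:a, b:] p = [:a:] + smult b p"
  by (simp add: pcompose_pCons)

lemma pderiv_linear: "pderiv [:a, b:] = [:b:]"
  by (simp add: pderiv_pCons)

lemma linear_poly_cases:
  assumes "degree (l::'a::comm_ring_1 poly) = 1"
  shows "l = [:coeff l 0, coeff l 1:] \<and> coeff l 1 \<noteq> 0"
proof -
  have "coeff l 1 \<noteq> 0" using assms by (metis leading_coeff_0_iff one_neq_zero degree_0)
  moreover have "l = [:coeff l 0, coeff l 1:]"
    by (rule poly_eqI) (auto simp: coeff_pCons coeff_eq_0 assms split: nat.splits)
  ultimately show ?thesis by simp
qed

lemma linv_linear:
  assumes "degree (l::'a::field poly) = 1"
  shows "pcompose l (linv l) = [:0, 1:] \<and> pcompose (linv l) l = [:0, 1:] \<and> degree (linv l) = 1"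
proof -
  define a b where "a = coeff l 0" and "b = coeff l 1"
  have lab: "l = [:a, b:]" and b0: "b \<noteq> 0" using linear_poly_cases[OF assms] unfolding a_def b_def by auto
  define m where "m = [:-a/b, 1/b:]"
  have right: "pcompose l m = [:0, 1:]" unfolding lab m_def pcompose_linear using b0 by simp
  have left: "pcompose m l = [:0, 1:]" unfolding lab m_def pcompose_linear using b0
    by (simp add: field_simps)
  have "linv l = m"
    unfolding linv_def
  proof (rule the_equality)
    fix m' assume h: "pcompose l m' = [:0, 1:] \<and> pcompose m' l = [:0, 1:]"
    have "m' = pcompose m' (pcompose l m)" using right by simp
    also have "\<dots> = m" by (simp add: pcompose_assoc h)
    finally show "m' = m" .
  qed (use right left in simp)
  moreover have "degree m = 1" unfolding m_def using b0 by simp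
  ultimately show ?thesis using right left by simp
qed

lemma poly_root_exists: "degree (p::complex poly) \<ge> 1 \<Longrightarrow> \<exists>z. poly p z = 0"
  by (rule fundamental_theorem_of_algebra_alt) auto

lemma pcompose_power: "pcompose (p ^ k) q = (pcompose p q) ^ k"
  by (induction k) (simp_all add: pcompose_mult pcompose_1)

lemma pcompose_X2_minus_4: "pcompose [:-4, 0, 1:] (q::'a::comm_ring_1 poly) = q\<^sup>2 - 4"
proof -
  have "[:-4::'a:] = - [:4:]" by simp
  then show ?thesis by (simp add: pcompose_pCons power2_eq_square numeral_poly)
qed

lemma degree_minus_const: "degree p \<ge> 1 \<Longrightarrow> degree (p - [:y:]) = degree (p::'a::comm_ring_1 poly)"
proof -
  assume "degree p \<ge> 1"
  then have "degree (p + [:-y:]) = degree p" by (intro degree_add_eq_left) simp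
  moreover have "p - [:y:] = p + [:-y:]" by (simp only: diff_conv_add_uminus) simp
  ultimately show ?thesis by metis
qed

lemma sign_cases: "A = P \<or> A = - P \<Longrightarrow> \<exists>\<sigma>::complex. \<sigma>\<^sup>2 = 1 \<and> A = smult \<sigma> P"
  by (metis power2_minus power_one smult_1_left smult_minus_left)

section \<open>Uniqueness of polynomial solutions of the Chebyshev equation\<close>

text \<open>Differentiating (X^2 - 4) Q'^2 = k (Q^2 - 4) and dividing by 2Q' gives the
  linear equation Q = k D Q with the operator D below.  D multiplies the
  leading coefficient of a degree-e polynomial by e^2 and does not raise degrees,
  so the linear equation has (up to scaling) only one polynomial solution.\<close>
definition cheb_diff_op :: "complex poly \<Rightarrow> complex poly" where
  "cheb_diff_op W = [:-4, 0, 1:] * pderiv (pderiv W) + [:0, 1:] * pderiv W"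

lemma cheb_diff_op_linear:
  "cheb_diff_op (p - smult c q) = cheb_diff_op p - smult c (cheb_diff_op q)"
  unfolding cheb_diff_op_def
  by (simp add: pderiv_diff pderiv_smult ring_distribs mult_smult_right smult_add_right
           del: mult_pCons_left mult_pCons_right)

lemma coeff_cheb_diff_op:
  assumes "degree W = e"
  shows "coeff (cheb_diff_op W) e = of_nat (e\<^sup>2) * coeff W e"
proof -
  have S: "[:-4, 0, 1:] * P = smult (-4) P + pCons 0 (pCons 0 P)" for P :: "complex poly"
    by (simp add: algebra_simps)
  have X: "[:0, 1:] * P = pCons 0 P" for P :: "complex poly" by simp
  have z: "coeff W (Suc (Suc e)) = 0" using assms by (simp add: coeff_eq_0)
  consider "e = 0" | "e = 1" | j where "e = Suc (Suc j)"
    by (metis One_nat_def not0_implies_Suc)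
  then show ?thesis
  proof cases
    case 3
    have "coeff (cheb_diff_op W) e = of_nat ((e - 1) * e) * coeff W e + of_nat e * coeff W e"
      using 3 z unfolding cheb_diff_op_def S X by (simp add: coeff_pderiv algebra_simps)
    also have "\<dots> = of_nat (e\<^sup>2) * coeff W e"
      using 3 by (simp add: power2_eq_square algebra_simps)
    finally show ?thesis .
  qed (use z in \<open>simp_all add: cheb_diff_op_def S X coeff_pderiv\<close>)
qed

lemma cheb_ode_differentiated:
  assumes H: "Q\<^sup>2 - 4 = smult k ([:-4, 0, 1:] * (pderiv Q)\<^sup>2)" and d: "degree Q \<ge> 1"
  shows "Q = smult k (cheb_diff_op Q)"
proof -
  have p4: "pderiv (4::complex poly) = 0" by (simp add: numeral_poly pderiv_pCons)
  have lhs: "pderiv (Q\<^sup>2 - 4) = smult 2 (pderiv Q * Q)"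
    by (simp add: pderiv_diff pderiv_mult power2_eq_square p4 numeral_2_mult_poly[symmetric] algebra_simps
             del: mult_pCons_left mult_pCons_right)
  have x2: "(p::complex poly) * [:0, 2:] = smult 2 (p * [:0, 1:])" for p by simp
  have rhs: "pderiv (smult k ([:-4, 0, 1:] * (pderiv Q)\<^sup>2)) = smult 2 (pderiv Q * smult k (cheb_diff_op Q))"
    unfolding cheb_diff_op_def
    by (simp add: pderiv_smult pderiv_mult power2_eq_square pderiv_pCons numeral_2_mult_poly algebra_simps
             smult_add_right x2 del: mult_pCons_left mult_pCons_right)
  have "smult 2 (pderiv Q * Q) = smult 2 (pderiv Q * smult k (cheb_diff_op Q))"
    using arg_cong[OF H, of pderiv] lhs rhs by simp
  then have "pderiv Q * Q = pderiv Q * smult k (cheb_diff_op Q)"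
    by (metis smult_smult smult_1_left field_class.field_inverse zero_neq_numeral)
  then have "pderiv Q * (Q - smult k (cheb_diff_op Q)) = 0" by (simp add: algebra_simps)
  moreover have "pderiv Q \<noteq> 0" using d by (simp add: pderiv_eq_0_iff)
  ultimately show ?thesis by simp
qed

lemma cheb_diff_op_eigen_degree:
  assumes DW: "W = smult k (cheb_diff_op W)" and W0: "W \<noteq> 0"
  shows "k * of_nat ((degree W)\<^sup>2) = 1"
proof -
  have "lead_coeff W = k * (of_nat ((degree W)\<^sup>2) * lead_coeff W)"
    by (subst (1) DW) (simp add: coeff_cheb_diff_op)
  then show ?thesis using W0 by (simp add: algebra_simps)
qed

text \<open>The solutions of degree d \<ge> 1 of Q = k D Q are the multiples of T_d:
  the difference Q - q T_d would be an eigenvector of smaller degree with the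
  same eigenvalue.\<close>
lemma cheb_diff_op_solutions:
  assumes DQ: "Q = smult k (cheb_diff_op Q)" and dQ: "degree Q = d" "d \<ge> 1"
  shows "Q = smult (coeff Q d) (chebT d)"
proof -
  define q where "q = coeff Q d"
  have "Q \<noteq> 0" using dQ by auto
  from cheb_diff_op_eigen_degree[OF DQ this] have kd: "k * of_nat (d\<^sup>2) = 1" using dQ by simp
  have HT: "(chebT d)\<^sup>2 - 4 = smult k ([:-4, 0, 1:] * (pderiv (chebT d))\<^sup>2)"
    unfolding chebT_ode using kd by simp
  have DT: "chebT d = smult k (cheb_diff_op (chebT d))"
    using cheb_ode_differentiated[OF HT] dQ by simp
  define W where "W = Q - smult q (chebT d)"
  have "smult k (cheb_diff_op W) = smult k (cheb_diff_op Q) - smult q (smult k (cheb_diff_op (chebT d)))"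
    unfolding W_def cheb_diff_op_linear by (simp add: smult_diff_right mult.commute)
  also have "\<dots> = W" using DQ DT W_def by simp
  finally have DW: "W = smult k (cheb_diff_op W)" by simp
  have "W = 0"
  proof (rule ccontr)
    assume "W \<noteq> 0"
    have "degree W \<le> d" unfolding W_def using dQ by (intro degree_diff_le) auto
    moreover have "coeff W d = 0" unfolding W_def q_def using lead_coeff_chebT[OF dQ(2)] by simp
    ultimately have "degree W < d" using \<open>W \<noteq> 0\<close> by (metis le_neq_implies_less leading_coeff_0_iff)
    moreover have "of_nat ((degree W)\<^sup>2) = (of_nat (d\<^sup>2) :: complex)"
      using cheb_diff_op_eigen_degree[OF DW \<open>W \<noteq> 0\<close>] kd by (metis mult_left_cancel mult_zero_left zero_neq_one)
    then have "(degree W)\<^sup>2 = d\<^sup>2" using of_nat_eq_iff by blast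
    then have "degree W = d" using power_eq_iff_eq_base[of 2 "degree W" d] by simp
    ultimately show False by simp
  qed
  then show ?thesis unfolding W_def q_def by simp
qed

lemma cheb_ode_unique:
  assumes dQ: "degree Q = d" "d \<ge> 1" and H: "Q\<^sup>2 - 4 = smult k ([:-4, 0, 1:] * (pderiv Q)\<^sup>2)"
  shows "Q = chebT d \<or> Q = - chebT d"
proof -
  have DQ: "Q = smult k (cheb_diff_op Q)" using cheb_ode_differentiated[OF H] dQ by simp
  have "Q \<noteq> 0" using dQ by auto
  from cheb_diff_op_eigen_degree[OF DQ this] have kd: "k * of_nat (d\<^sup>2) = 1" using dQ by simp
  define q where "q = coeff Q d"
  have QT: "Q = smult q (chebT d)" using cheb_diff_op_solutions[OF DQ dQ] unfolding q_def .
  have HT: "(chebT d)\<^sup>2 - 4 = smult k ([:-4, 0, 1:] * (pderiv (chebT d))\<^sup>2)"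
    unfolding chebT_ode using kd by simp
  have "Q\<^sup>2 - 4 = smult (q\<^sup>2) (smult k ([:-4, 0, 1:] * (pderiv (chebT d))\<^sup>2))"
    using H unfolding QT pderiv_smult by (simp add: power2_eq_square mult_smult_right mult_smult_left mult.commute)
  then have "smult (q\<^sup>2) ((chebT d)\<^sup>2) - 4 = smult (q\<^sup>2) ((chebT d)\<^sup>2 - 4)"
    unfolding HT[symmetric] QT by (simp add: power_mult_distrib power2_eq_square)
  then have "coeff (smult (q\<^sup>2) 4) 0 = coeff (4::complex poly) 0" by (simp add: algebra_simps smult_diff_right)
  then have "q\<^sup>2 = 1" by (simp add: numeral_poly)
  then show ?thesis using QT by (auto simp: power2_eq_1_iff)
qed

lemma cheb_ode_unique_linear:
  assumes dmu: "degree \<mu> = 1" and dY: "degree Y = d" "d \<ge> 1"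
    and H: "smult s ((\<mu>\<^sup>2 - 4) * (pderiv Y)\<^sup>2) = Y\<^sup>2 - 4"
  shows "Y = pcompose (chebT d) \<mu> \<or> Y = - pcompose (chebT d) \<mu>"
proof -
  define \<nu> where "\<nu> = linv \<mu>"
  have inv: "pcompose \<mu> \<nu> = [:0, 1:]" "pcompose \<nu> \<mu> = [:0, 1:]" "degree \<nu> = 1"
    using linv_linear[OF dmu] unfolding \<nu>_def by auto
  define g b where "g = coeff \<nu> 0" and "b = coeff \<nu> 1"
  have nu: "\<nu> = [:g, b:]" and b0: "b \<noteq> 0" using linear_poly_cases[OF inv(3)] unfolding g_def b_def by auto
  define Z where "Z = pcompose Y \<nu>"
  have dZ: "degree Z = d" unfolding Z_def degree_pcompose using inv dY by simp
  have Y'Z: "pcompose (pderiv Y) \<nu> = smult (1/b) (pderiv Z)"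
    unfolding Z_def pderiv_pcompose nu pderiv_linear using b0 by simp
  have "pcompose (smult s ((\<mu>\<^sup>2 - 4) * (pderiv Y)\<^sup>2)) \<nu> = pcompose (Y\<^sup>2 - 4) \<nu>" using H by simp
  then have "smult s (([:0, 1:]\<^sup>2 - 4) * (smult (1/b) (pderiv Z))\<^sup>2) = Z\<^sup>2 - 4"
    unfolding Z_def[symmetric] Y'Z[symmetric]
    by (simp add: pcompose_smult pcompose_mult pcompose_diff power2_eq_square inv Z_def numeral_poly)
  then have "Z\<^sup>2 - 4 = smult (s / b\<^sup>2) ([:-4, 0, 1:] * (pderiv Z)\<^sup>2)"
    by (simp add: power2_eq_square mult_smult_right mult_smult_left field_simps numeral_poly)
  from cheb_ode_unique[OF dZ dY(2) this] have "Z = chebT d \<or> Z = - chebT d" .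
  moreover have "Y = pcompose Z \<mu>" unfolding Z_def by (simp flip: pcompose_assoc add: inv)
  ultimately show ?thesis by (auto simp: pcompose_uminus)
qed

section \<open>Decompositions of linearly twisted Chebyshev polynomials\<close>

lemma chebT_ode_pcompose:
  "(Y\<^sup>2 - 4) * (pcompose (pderiv (chebT a)) Y)\<^sup>2 = smult (of_nat (a\<^sup>2)) ((pcompose (chebT a) Y)\<^sup>2 - 4)"
proof -
  have "pcompose ([:-4, 0, 1:] * (pderiv (chebT a))\<^sup>2) Y = pcompose (smult (of_nat (a\<^sup>2)) (chebT a ^ 2 - 4)) Y"
    using chebT_ode[of a] by simp
  then show ?thesis
    by (simp only: pcompose_mult pcompose_smult pcompose_diff pcompose_X2_minus_4 power2_eq_square
          pcompose_const numeral_poly)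
qed

lemma chebT_linear_ode:
  assumes "degree L = 1"
  shows "(L\<^sup>2 - 4) * (pderiv (pcompose (chebT N) L))\<^sup>2
           = smult (of_nat (N\<^sup>2) * (coeff L 1)\<^sup>2) ((pcompose (chebT N) L)\<^sup>2 - 4)"
proof -
  define e c where "e = coeff L 0" and "c = coeff L 1"
  have L: "L = [:e, c:]" using linear_poly_cases[OF assms] unfolding e_def c_def by auto
  have d: "pderiv (pcompose (chebT N) L) = smult c (pcompose (pderiv (chebT N)) L)"
    unfolding pderiv_pcompose L pderiv_linear by simp
  show ?thesis unfolding d c_def[symmetric]
    using arg_cong[OF chebT_ode_pcompose[of L N], of "smult (c\<^sup>2)"]
    by (simp add: power2_eq_square mult_smult_right mult_smult_left smult_smult mult.commute mult.left_commute)
qed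

lemma pcompose_dvd_cancel:
  fixes E F B :: "'a::field poly"
  assumes B: "degree B > 0" and F: "F \<noteq> 0" and dvd: "pcompose F B dvd pcompose E B"
  shows "F dvd E"
proof (rule ccontr)
  assume "\<not> F dvd E"
  then have Rm0: "E mod F \<noteq> 0" by (simp add: mod_eq_0_iff_dvd)
  have "pcompose E B = pcompose F B * pcompose (E div F) B + pcompose (E mod F) B"
    by (metis div_mult_mod_eq mult.commute pcompose_add pcompose_mult)
  with dvd have "pcompose F B dvd pcompose (E mod F) B" by (simp add: dvd_add_right_iff)
  moreover have "pcompose (E mod F) B \<noteq> 0" using Rm0 pcompose_eq_0[OF _ B] by blast
  ultimately have "degree (pcompose F B) \<le> degree (pcompose (E mod F) B)" by (rule dvd_imp_degree_le)
  then have "degree F \<le> degree (E mod F)" unfolding degree_pcompose using B by simp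
  moreover have "degree (E mod F) < degree F" using F Rm0 degree_mod_less' by blast
  ultimately show False by simp
qed

lemma composite_ode_quotient:
  fixes A B M :: "complex poly"
  assumes K: "K \<noteq> 0" and dA: "degree A \<ge> 1" and dB: "degree B \<ge> 1"
    and P: "M * (pderiv (pcompose A B))\<^sup>2 = smult K ((pcompose A B)\<^sup>2 - 4)"
  shows "\<exists>R. A\<^sup>2 - 4 = (pderiv A)\<^sup>2 * R \<and> degree R = 2 \<and> M * (pderiv B)\<^sup>2 = smult K (pcompose R B)"
proof -
  define E F where "E = A\<^sup>2 - 4" and "F = (pderiv A)\<^sup>2"
  have EB: "(pcompose A B)\<^sup>2 - 4 = pcompose E B"
    unfolding E_def by (simp only: pcompose_diff pcompose_mult power2_eq_square numeral_poly pcompose_const)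
  have main: "pcompose F B * (M * (pderiv B)\<^sup>2) = smult K (pcompose E B)"
    using P unfolding EB[symmetric] F_def pderiv_pcompose
    by (simp only: pcompose_mult power2_eq_square ac_simps)
  have F0: "F \<noteq> 0" unfolding F_def using dA by (simp add: pderiv_eq_0_iff)
  have B0: "degree B > 0" using dB by simp
  have FB0: "pcompose F B \<noteq> 0" using F0 pcompose_eq_0[OF _ B0] by blast
  have "pcompose F B dvd pcompose E B"
    using main K by (metis dvdI dvd_smult_iff)
  then obtain R where EFR: "E = F * R" using pcompose_dvd_cancel[OF B0 F0] by (metis dvdE)
  have "degree E = 2 * degree A"
  proof -
    have "A \<noteq> 0" using dA by auto
    then have "degree (A\<^sup>2) = 2 * degree A" by (simp add: degree_power_eq)
    moreover have "degree (- 4 :: complex poly) < degree (A\<^sup>2)" using dA \<open>degree (A\<^sup>2) = _\<close>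
      by (simp add: numeral_poly)
    ultimately show ?thesis unfolding E_def using degree_add_eq_left[of "- 4" "A\<^sup>2"] by simp
  qed
  moreover have "degree F = 2 * (degree A - 1)" unfolding F_def using dA
    by (subst degree_power_eq) (auto simp: pderiv_eq_0_iff degree_pderiv)
  moreover have "R \<noteq> 0" using EFR \<open>degree E = _\<close> dA by auto
  ultimately have "degree R = 2" using EFR degree_mult_eq[OF F0] dA by simp
  moreover have "M * (pderiv B)\<^sup>2 = smult K (pcompose R B)"
  proof -
    have "pcompose F B * (M * (pderiv B)\<^sup>2) = pcompose F B * smult K (pcompose R B)"
      using main unfolding EFR by (simp only: pcompose_mult mult_smult_right)
    then show ?thesis using FB0 mult_left_cancel by blast
  qed
  ultimately show ?thesis using EFR unfolding E_def F_def by blast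
qed

lemma order_linear_sq_minus_4:
  fixes L :: "complex poly"
  assumes "degree L = 1" and "poly L x = 2"
  shows "order x (L\<^sup>2 - 4) = 1"
proof -
  define e c where "e = coeff L 0" and "c = coeff L 1"
  have L: "L = [:e, c:]" and c0: "c \<noteq> 0" using linear_poly_cases[OF assms(1)] unfolding e_def c_def by auto
  have e: "e = 2 - c * x" using assms(2) L by (simp add: mult.commute eq_diff_eq)
  have f: "L\<^sup>2 - 4 = smult c [:-x, 1:] * (L + 2)"
    unfolding L e by (simp add: power2_eq_square numeral_poly algebra_simps)
  have nz: "poly (L + 2) x \<noteq> 0" using assms(2) by simp
  then have "L + 2 \<noteq> 0" by (metis poly_0)
  then have "smult c [:-x, 1:] * (L + 2) \<noteq> 0" using c0 by (simp only: mult_eq_0_iff) simp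
  then have "order x (L\<^sup>2 - 4) = order x (smult c [:-x, 1:]) + order x (L + 2)"
    unfolding f by (rule order_mult)
  also have "\<dots> = 1"
    using c0 order_smult[of c x "[:-x, 1:]"] order_power_n_n[of x 1] order_0I[OF nz] by simp
  finally show ?thesis .
qed

text \<open>(L^2 - 4) B'^2 is never a constant multiple of a square (B - p)^2: at the
  root of L - 2 the left side vanishes to odd order and the right side to even order.\<close>
lemma linear_ode_not_square:
  fixes L B :: "complex poly"
  assumes dL: "degree L = 1" and dB: "degree B \<ge> 1" and c: "c \<noteq> 0"
  shows "(L\<^sup>2 - 4) * (pderiv B)\<^sup>2 \<noteq> pcompose (smult c ([:-p, 1:]\<^sup>2)) B"
proof
  assume eq: "(L\<^sup>2 - 4) * (pderiv B)\<^sup>2 = pcompose (smult c ([:-p, 1:]\<^sup>2)) B"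
  obtain e k where L: "L = [:e, k:]" and k: "k \<noteq> 0" using linear_poly_cases[OF dL] by blast
  define x where "x = (2 - e) / k"
  have x: "poly L x = 2" unfolding L x_def using k by simp
  have L4: "L\<^sup>2 - 4 \<noteq> 0"
  proof
    assume "L\<^sup>2 - 4 = 0"
    then have "degree (L\<^sup>2) = degree (4::complex poly)" by simp
    moreover have "L \<noteq> 0" using dL by auto
    ultimately show False using dL by (simp add: degree_power_eq numeral_poly)
  qed
  have B'0: "pderiv B \<noteq> 0" using dB by (simp add: pderiv_eq_0_iff)
  have Bp: "pcompose [:-p, 1:] B = B + [:-p:]" by (simp add: pcompose_pCons)
  have Bp0: "B + [:-p:] \<noteq> 0"
  proof -
    have "degree (B + [:-p:]) = degree B" by (rule degree_add_eq_left) (use dB in simp)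
    then show ?thesis using dB by auto
  qed
  have "order x ((L\<^sup>2 - 4) * (pderiv B)\<^sup>2) = 1 + 2 * order x (pderiv B)"
    using L4 B'0 order_linear_sq_minus_4[OF dL x] by (simp add: order_mult power2_eq_square)
  moreover have "pcompose (smult c ([:-p, 1:]\<^sup>2)) B = smult c ((B + [:-p:]) * (B + [:-p:]))"
    by (simp only: pcompose_smult power2_eq_square pcompose_mult Bp)
  then have "order x (pcompose (smult c ([:-p, 1:]\<^sup>2)) B) = 2 * order x (B + [:-p:])"
    using c Bp0 by (simp add: order_smult order_mult)
  ultimately have "1 + 2 * order x (pderiv B) = 2 * order x (B + [:-p:])" using eq by simp
  then show False by presburger
qed

lemma quadratic_affine_identity:
  fixes p q u x :: complex
  assumes "p - q \<noteq> 0"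
  shows "u * ((x - p) * (x - q)) = u * (p - q)\<^sup>2 / 16 * ((-2 * (p + q) / (p - q) + x * (4 / (p - q)))\<^sup>2 - 4)"
proof -
  define d where "d = p - q"
  have d: "d \<noteq> 0" using assms d_def by simp
  define a where "a = 4 * x - 2 * (p + q)"
  have h: "-2 * (p + q) / d + x * (4 / d) = a / d"
    unfolding a_def by (simp add: add_divide_distrib diff_divide_distrib algebra_simps)
  have "(a / d)\<^sup>2 - 4 = (a\<^sup>2 - 4 * d\<^sup>2) / d\<^sup>2"
    using d by (simp add: power_divide field_simps)
  also have "a\<^sup>2 - 4 * d\<^sup>2 = 16 * ((x - p) * (x - q))"
    unfolding d_def a_def by (simp add: power2_eq_square algebra_simps)
  finally have E: "(a / d)\<^sup>2 - 4 = 16 * ((x - p) * (x - q)) / d\<^sup>2" .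
  have "u * d\<^sup>2 / 16 * (16 * ((x - p) * (x - q)) / d\<^sup>2) = u * ((x - p) * (x - q))"
    using d by (simp add: field_simps)
  then show ?thesis unfolding d_def[symmetric] h E by simp
qed

lemma quadratic_as_linear_sq_minus_4:
  fixes R :: "complex poly"
  assumes dR: "degree R = 2" and not_sq: "\<And>c p. R \<noteq> smult c ([:-p, 1:]\<^sup>2)"
  shows "\<exists>\<mu> s. degree \<mu> = 1 \<and> R = smult s (\<mu>\<^sup>2 - 4)"
proof -
  obtain p where "poly R p = 0" using poly_root_exists[of R] dR by auto
  then obtain R1 where R1: "R = [:-p, 1:] * R1" by (metis poly_eq_0_iff_dvd dvdE)
  have "R1 \<noteq> 0" using dR R1 by auto
  then have "degree R1 = 1" using dR unfolding R1 by (subst (asm) degree_mult_eq) auto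
  then obtain u0 u where R1e: "R1 = [:u0, u:]" and u: "u \<noteq> 0" using linear_poly_cases by blast
  define q where "q = - u0 / u"
  have "R1 = smult u [:-q, 1:]" unfolding R1e q_def using u by simp
  then have Rpq: "R = smult u ([:-p, 1:] * [:-q, 1:])" using R1 by (simp add: mult_smult_right algebra_simps)
  have pq: "p - q \<noteq> 0" using not_sq[of u p] Rpq by (auto simp: power2_eq_square)
  define \<mu> where "\<mu> = [:-2 * (p + q) / (p - q), 4 / (p - q):]"
  have "poly R x = poly (smult (u * (p - q)\<^sup>2 / 16) (\<mu>\<^sup>2 - 4)) x" for x
    unfolding Rpq \<mu>_def using quadratic_affine_identity[OF pq, of u x] by (simp add: algebra_simps)
  then have "R = smult (u * (p - q)\<^sup>2 / 16) (\<mu>\<^sup>2 - 4)" by (simp add: poly_eq_poly_eq_iff fun_eq_iff flip: poly_eq_poly_eq_iff)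
  moreover have "degree \<mu> = 1" unfolding \<mu>_def using pq by simp
  ultimately show ?thesis by blast
qed

lemma chebT_decomp_outer:
  assumes dL: "degree L = 1" and dA: "degree A = a" "a \<ge> 1" and dB: "degree B \<ge> 1"
    and eq: "pcompose A B = pcompose (chebT N) L"
  shows "\<exists>\<mu>. degree \<mu> = 1 \<and> (A = pcompose (chebT a) \<mu> \<or> A = - pcompose (chebT a) \<mu>)"
proof -
  define K where "K = of_nat (N\<^sup>2) * (coeff L 1)\<^sup>2"
  have "N = a * degree B" using arg_cong[OF eq, of degree] dL by (simp add: degree_pcompose dA)
  then have "K \<noteq> 0" unfolding K_def using dA dB linear_poly_cases[OF dL] by simp
  moreover have "(L\<^sup>2 - 4) * (pderiv (pcompose A B))\<^sup>2 = smult K ((pcompose A B)\<^sup>2 - 4)"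
    unfolding eq K_def by (rule chebT_linear_ode[OF dL])
  ultimately obtain R where EFR: "A\<^sup>2 - 4 = (pderiv A)\<^sup>2 * R" and dR: "degree R = 2"
      and RB: "(L\<^sup>2 - 4) * (pderiv B)\<^sup>2 = smult K (pcompose R B)"
    using composite_ode_quotient dA dB by blast
  have "R \<noteq> smult c ([:-p, 1:]\<^sup>2)" for c p
  proof
    assume "R = smult c ([:-p, 1:]\<^sup>2)"
    then have "(L\<^sup>2 - 4) * (pderiv B)\<^sup>2 = pcompose (smult (K * c) ([:-p, 1:]\<^sup>2)) B"
      using RB by (simp add: pcompose_smult)
    moreover have "c \<noteq> 0" using dR \<open>R = _\<close> by auto
    ultimately show False using linear_ode_not_square[OF dL dB] \<open>K \<noteq> 0\<close> by simp
  qed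
  then obtain \<mu> s where dmu: "degree \<mu> = 1" and R: "R = smult s (\<mu>\<^sup>2 - 4)"
    using quadratic_as_linear_sq_minus_4[OF dR] by blast
  have "smult s ((\<mu>\<^sup>2 - 4) * (pderiv A)\<^sup>2) = A\<^sup>2 - 4"
    using EFR unfolding R by (simp add: mult_smult_left mult.commute)
  from cheb_ode_unique_linear[OF dmu dA this] show ?thesis using dmu by blast
qed

text \<open>Inner rigidity: if (\<plusminus>T_a \<circ> \<mu>) \<circ> B = T_N \<circ> L, then Y = \<mu> \<circ> B again satisfies a
  Chebyshev equation twisted by L, so \<mu> \<circ> B = \<plusminus>T_b \<circ> L.\<close>
lemma chebT_decomp_inner:
  assumes dL: "degree L = 1" and dmu: "degree \<mu> = 1" and a1: "a \<ge> 1"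
    and dB: "degree B = b" "b \<ge> 1" and sig: "\<sigma>\<^sup>2 = 1"
    and eq: "pcompose (smult \<sigma> (pcompose (chebT a) \<mu>)) B = pcompose (chebT N) L"
  shows "pcompose \<mu> B = pcompose (chebT b) L \<or> pcompose \<mu> B = - pcompose (chebT b) L"
proof -
  define Y where "Y = pcompose \<mu> B"
  have dY: "degree Y = b" unfolding Y_def degree_pcompose using dmu dB by simp
  define K where "K = of_nat (N\<^sup>2) * (coeff L 1)\<^sup>2"
  define G where "G = (pcompose (pderiv (chebT a)) Y)\<^sup>2"
  have TN: "pcompose (chebT N) L = smult \<sigma> (pcompose (chebT a) Y)"
    unfolding eq[symmetric] Y_def by (simp add: pcompose_smult pcompose_assoc)
  have "N = a * b" using arg_cong[OF TN, of degree] dL dY sig by (auto simp: degree_pcompose)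
  then have K0: "K \<noteq> 0" unfolding K_def using a1 dB linear_poly_cases[OF dL] by simp
  have a0: "of_nat (a\<^sup>2) \<noteq> (0::complex)" using a1 by simp
  have G0: "G \<noteq> 0"
  proof -
    have "pderiv (chebT a) \<noteq> 0" using a1 by (simp add: pderiv_eq_0_iff)
    then show ?thesis unfolding G_def using pcompose_eq_0 dY dB by fastforce
  qed
  have "(L\<^sup>2 - 4) * (pderiv Y)\<^sup>2 * G = smult K ((pcompose (chebT a) Y)\<^sup>2 - 4)"
  proof -
    have "(pderiv (smult \<sigma> (pcompose (chebT a) Y)))\<^sup>2 = G * (pderiv Y)\<^sup>2"
      unfolding G_def pderiv_smult pderiv_pcompose using sig
      by (simp add: power_mult_distrib power2_eq_square smult_smult mult.commute mult.left_commute)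
    moreover have "(smult \<sigma> (pcompose (chebT a) Y))\<^sup>2 = (pcompose (chebT a) Y)\<^sup>2"
      using sig by (simp add: power2_eq_square smult_smult mult.commute mult.left_commute)
    ultimately show ?thesis
      using chebT_linear_ode[OF dL, of N] unfolding TN K_def by (simp add: ac_simps)
  qed
  also have "\<dots> = smult (K / of_nat (a\<^sup>2)) ((Y\<^sup>2 - 4) * G)"
    unfolding G_def chebT_ode_pcompose using a0 by simp
  finally have "(L\<^sup>2 - 4) * (pderiv Y)\<^sup>2 = smult (K / of_nat (a\<^sup>2)) (Y\<^sup>2 - 4)"
    using G0 by (metis mult_smult_left mult_right_cancel)
  then have "smult (of_nat (a\<^sup>2) / K) ((L\<^sup>2 - 4) * (pderiv Y)\<^sup>2) = Y\<^sup>2 - 4"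
    using K0 a0 by simp
  from cheb_ode_unique_linear[OF dL dY dB(2) this] show ?thesis unfolding Y_def .
qed

section \<open>Affine symmetries of Chebyshev polynomials\<close>

lemma coeff_pcompose_linear_top:
  fixes p :: "complex poly"
  shows "degree p \<le> Suc m \<Longrightarrow> coeff (pcompose p [:e, c:]) (Suc m) = c ^ Suc m * coeff p (Suc m) \<and>
     coeff (pcompose p [:e, c:]) m = c ^ m * (coeff p m + of_nat (Suc m) * e * coeff p (Suc m))"
proof (induction p arbitrary: m rule: pCons_induct)
  case (pCons a p)
  define r where "r = pcompose p [:e, c:]"
  have comp: "pcompose (pCons a p) [:e, c:] = [:a:] + smult e r + pCons 0 (smult c r)"
    unfolding r_def by (simp add: pcompose_pCons)
  have dp: "degree p \<le> m" using pCons.prems pCons.hyps by (auto simp: degree_pCons_eq_if split: if_splits)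
  have r1: "coeff r (Suc m) = 0" unfolding r_def using dp by (simp add: degree_pcompose coeff_eq_0)
  show ?case
  proof (cases m)
    case 0
    then obtain p0 where p0: "p = [:p0:]" using dp by (metis le_zero_eq degree_eq_zeroE)
    then show ?thesis using 0 comp r_def by simp
  next
    case (Suc m')
    have IH: "coeff r (Suc m') = c ^ Suc m' * coeff p (Suc m') \<and>
        coeff r m' = c ^ m' * (coeff p m' + of_nat (Suc m') * e * coeff p (Suc m'))"
      unfolding r_def using pCons.IH[of m'] dp Suc by simp
    show ?thesis unfolding comp using IH r1 Suc by (simp add: algebra_simps)
  qed
qed simp

lemma coeff_pcompose_scale: "coeff (pcompose p [:0, c:]) j = c ^ j * coeff p j" for p :: "complex poly"
proof (induction p arbitrary: j rule: pCons_induct)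
  case (pCons a p)
  show ?case by (cases j) (simp_all add: pcompose_pCons pCons.IH algebra_simps)
qed simp

text \<open>For k \<ge> 3, an affine substitution X \<mapsto> cX + e maps T_k to an affine image
  g + h T_k only if e = 0 and c = \<plusminus>1: compare the coefficients of X^k, X^(k-1), X^(k-2).\<close>
lemma chebT_affine_rigid:
  assumes k: "k \<ge> 3" and c0: "c \<noteq> 0"
    and eq: "pcompose (chebT k) [:e, c:] = [:g:] + smult h (chebT k)"
  shows "e = 0 \<and> (c = 1 \<or> c = -1)"
proof -
  obtain m where km: "k = Suc m" using k by (cases k) auto
  note top = coeff_pcompose_linear_top[of "chebT k" m e c]
  have "coeff (pcompose (chebT k) [:e, c:]) m = c ^ m * (of_nat k * e)"
    using top km lead_coeff_chebT[of k] coeff_chebT_sub1[of k] k by simp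
  moreover have "coeff ([:g:] + smult h (chebT k)) m = 0"
    using k km coeff_chebT_sub1[of k] by (cases m) auto
  ultimately have e0: "e = 0" using eq c0 k by simp
  have hk: "h = c ^ k"
    using top km lead_coeff_chebT[of k] k eq by simp
  have "coeff (pcompose (chebT k) [:0, c:]) (k - 2) = c ^ (k - 2) * (- of_nat k)"
    using coeff_pcompose_scale coeff_chebT_sub2[of k] k by simp
  moreover have "coeff ([:g:] + smult h (chebT k)) (k - 2) = h * (- of_nat k)"
    using k coeff_chebT_sub2[of k] by (cases "k - 2") auto
  ultimately have "c ^ (k - 2) = c ^ k" using eq e0 hk k by simp
  moreover have "c ^ k = c ^ (k - 2) * c\<^sup>2"
  proof -
    have "k = (k - 2) + 2" using k by simp
    then show ?thesis by (metis power_add)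
  qed
  ultimately have "c ^ (k - 2) * (c\<^sup>2 - 1) = 0" by (simp add: algebra_simps)
  then have "c\<^sup>2 = 1" using c0 by simp
  then show ?thesis using e0 by (simp add: power2_eq_1_iff)
qed

lemma linear_relation_chebT:
  assumes M3: "M \<ge> 3" and dmu: "degree \<mu> = 1" and dnu: "degree \<nu> = 1" and dL: "degree L = 1"
    and rho: "\<rho>\<^sup>2 = 1" and tau: "\<tau>\<^sup>2 = 1"
    and eq: "pcompose \<mu> (smult \<rho> (pcompose (chebT M) \<nu>)) = smult \<tau> (pcompose (chebT M) L)"
  shows "\<mu> = [:0, 1:] \<or> \<mu> = [:0, -1:]"
proof -
  obtain m0 m1 where mu: "\<mu> = [:m0, m1:]" and m10: "m1 \<noteq> 0" using linear_poly_cases[OF dmu] by blast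
  define Li where "Li = linv L"
  have Li: "pcompose L Li = [:0, 1:]" "degree Li = 1" using linv_linear[OF dL] unfolding Li_def by auto
  obtain e c where ka: "pcompose \<nu> Li = [:e, c:]" and c0: "c \<noteq> 0"
    using linear_poly_cases[of "pcompose \<nu> Li"] dnu Li(2) by (metis degree_pcompose mult_1)
  have mr0: "m1 * \<rho> \<noteq> 0" using m10 rho by auto
  have "pcompose ([:m0:] + smult (m1 * \<rho>) (pcompose (chebT M) \<nu>)) Li = pcompose (smult \<tau> (pcompose (chebT M) L)) Li"
    using eq unfolding mu pcompose_linear by simp
  then have "[:m0:] + smult (m1 * \<rho>) (pcompose (chebT M) [:e, c:]) = smult \<tau> (chebT M)"
    by (simp add: pcompose_add pcompose_smult pcompose_assoc[symmetric] Li ka)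
  then have "smult (m1 * \<rho>) (pcompose (chebT M) [:e, c:]) = smult \<tau> (chebT M) - [:m0:]"
    by (metis add_diff_cancel_left')
  then have "smult (1 / (m1 * \<rho>)) (smult (m1 * \<rho>) (pcompose (chebT M) [:e, c:]))
           = smult (1 / (m1 * \<rho>)) (smult \<tau> (chebT M) - [:m0:])"
    by simp
  then have "pcompose (chebT M) [:e, c:] = smult (\<tau> / (m1 * \<rho>)) (chebT M) - [:m0 / (m1 * \<rho>):]"
    using mr0 by (simp add: smult_diff_right)
  then have eq4: "pcompose (chebT M) [:e, c:] = [:- m0 / (m1 * \<rho>):] + smult (\<tau> / (m1 * \<rho>)) (chebT M)"
    by (simp add: diff_conv_add_uminus add.commute)
  from chebT_affine_rigid[OF M3 c0 eq4] have e0: "e = 0" and cpm: "c = 1 \<or> c = -1" by auto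
  have eq5: "smult (c ^ M) (chebT M) = [:- m0 / (m1 * \<rho>):] + smult (\<tau> / (m1 * \<rho>)) (chebT M)"
    using eq4 chebT_scale_sign[OF cpm] e0 by simp
  have hM: "c ^ M = \<tau> / (m1 * \<rho>)"
    using arg_cong[OF eq5, of "\<lambda>p. coeff p M"] lead_coeff_chebT[of M] M3 by (cases M) auto
  then have "m0 = 0" using eq5 mr0 by simp
  moreover have "(c ^ M)\<^sup>2 = 1" using cpm by (auto simp: power_mult[symmetric] mult.commute)
  then have "m1\<^sup>2 = 1" using hM tau rho by (simp add: power_divide power_mult_distrib field_simps)
  ultimately show ?thesis unfolding mu by (auto simp: power2_eq_1_iff)
qed

lemma chebT_twist_ne_neg:
  assumes k: "k \<ge> 3" "even k" and dL: "degree L = 1"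
  shows "pcompose (chebT k) L \<noteq> - chebT k"
proof
  assume eq: "pcompose (chebT k) L = - chebT k"
  obtain e c where L: "L = [:e, c:]" and c: "c \<noteq> 0" using linear_poly_cases[OF dL] by blast
  have "pcompose (chebT k) [:e, c:] = [:0:] + smult (-1) (chebT k)" using eq L by simp
  from chebT_affine_rigid[OF k(1) c this] have "L = [:0, 1:] \<or> L = [:0, -1:]" using L by auto
  then have "pcompose (chebT k) L = chebT k" using chebT_scale_sign[of _ k] k(2) by auto
  with eq have "chebT k = 0" by simp
  then show False using k(1) degree_chebT[of k] by simp
qed

section \<open>Iterates\<close>

lemma piter_0: "piter 0 f = [:0, 1:]"
  by (simp add: piter_def)

lemma piter_Suc: "piter (Suc n) f = pcompose f (piter n f)"
  by (simp add: piter_def)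

lemma piter_Suc': "piter (Suc n) f = pcompose (piter n f) f"
  by (induction n) (simp_all add: piter_0 piter_Suc pcompose_assoc)

lemma degree_piter: "degree (piter n (f::'a::idom poly)) = degree f ^ n"
  by (induction n) (simp_all add: piter_0 piter_Suc degree_pcompose)

lemma piter_conj:
  assumes lm: "pcompose l m = [:0, 1:]" and ml: "pcompose m l = [:0, 1:]"
  shows "piter n (pcompose m (pcompose f l)) = pcompose m (pcompose (piter n f) (l::'a::comm_ring_1 poly))"
proof (induction n)
  case 0 then show ?case by (simp add: piter_0 ml)
next
  case (Suc n)
  have "pcompose l (pcompose m Y) = Y" for Y by (simp add: pcompose_assoc lm)
  then show ?case unfolding piter_Suc Suc by (simp add: pcompose_assoc[symmetric])
qed

lemma piter_neg_chebT:
  assumes "even r"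
  shows "piter (Suc k) (- chebT r) = - chebT (r ^ Suc k)"
proof (induction k)
  case 0 then show ?case by (simp add: piter_Suc piter_0)
next
  case (Suc k)
  have "pcompose (chebT r) (- chebT (r ^ Suc k)) = pcompose (pcompose (chebT r) [:0, -1:]) (chebT (r ^ Suc k))"
    by (simp add: pcompose_assoc[symmetric] pcompose_linear)
  also have "\<dots> = chebT (r ^ Suc (Suc k))" using assms by (simp add: chebT_reflect chebT_compose)
  finally show ?case using Suc by (simp add: piter_Suc pcompose_uminus)
qed

lemma linear_conjugate:
  fixes f l lh :: "complex poly"
  assumes dl: "degree l = 1"
  defines "g \<equiv> pcompose (linv l) (pcompose f l)"
  shows "degree g = degree f"
    and "f = pcompose l (pcompose g (linv l))"
    and "piter n f = pcompose l (pcompose Q lh) \<Longrightarrow> piter n g = pcompose Q (pcompose lh l)"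
proof -
  have lm: "pcompose l (linv l) = [:0, 1:]" and ml: "pcompose (linv l) l = [:0, 1:]"
    and dm: "degree (linv l) = 1"
    using linv_linear[OF dl] by auto
  show "degree g = degree f" unfolding g_def degree_pcompose using dl dm by simp
  show "f = pcompose l (pcompose g (linv l))"
    unfolding g_def by (simp add: pcompose_assoc lm) (simp add: pcompose_assoc[symmetric] lm)
  assume "piter n f = pcompose l (pcompose Q lh)"
  then show "piter n g = pcompose Q (pcompose lh l)"
    unfolding g_def piter_conj[OF lm ml] by (simp add: pcompose_assoc ml)
qed

section \<open>Iterates equal to a twisted power map\<close>

lemma single_root_poly:
  fixes p :: "complex poly"
  assumes p0: "p \<noteq> 0" and roots: "\<And>y. poly p y = 0 \<Longrightarrow> y = a"
  shows "p = smult (lead_coeff p) ([:-a, 1:] ^ degree p)"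
proof -
  obtain q where pq: "p = [:-a, 1:] ^ order a p * q" and nd: "\<not> [:-a, 1:] dvd q"
    using order_decomp[OF p0] by blast
  have "degree q = 0"
  proof (rule ccontr)
    assume "degree q \<noteq> 0"
    then obtain z where z: "poly q z = 0" using poly_root_exists[of q] by auto
    then have "poly p z = 0" by (subst pq) simp
    then have "z = a" by (rule roots)
    then show False using z nd by (simp add: poly_eq_0_iff_dvd)
  qed
  then obtain q0 where q0: "q = [:q0:]" by (metis degree_eq_zeroE)
  have "q0 \<noteq> 0" using p0 pq q0 by auto
  define k where "k = order a p"
  have pk: "p = smult q0 ([:-a, 1:] ^ k)" using pq q0 unfolding k_def by simp
  have d: "degree ([:-a, 1:] ^ k) = k" by (simp add: degree_power_eq)
  then have c1: "coeff ([:-a, 1:] ^ k) k = 1" using lead_coeff_power[of "[:-a, 1:]" k] by simp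
  have dp: "degree p = k" using pk d \<open>q0 \<noteq> 0\<close> by simp
  have lc: "coeff p k = q0" using pk c1 by simp
  show ?thesis unfolding dp lc by (rule pk)
qed

lemma single_root_through_pcompose:
  fixes g P :: "complex poly"
  assumes dP: "degree P \<ge> 1" and g0: "g \<noteq> 0" and roots: "\<And>z. poly g (poly P z) = 0 \<Longrightarrow> z = x0"
  shows "g = smult (lead_coeff g) ([:-poly P x0, 1:] ^ degree g)"
proof (rule single_root_poly[OF g0])
  fix y assume gy: "poly g y = 0"
  obtain z where "poly (P - [:y:]) z = 0"
    using poly_root_exists[of "P - [:y:]"] dP by (auto simp: degree_minus_const)
  then have "poly P z = y" by simp
  then show "y = poly P x0" using roots[of z] gy by simp
qed

text \<open>If P = a (Q - y)^r with r \<ge> 2, then every root of Q - y is a critical point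
  of P; if moreover P - y = d (X - x)^M with M \<ge> 2, this forces y = 0.\<close>
lemma power_form_critical_point:
  fixes P Q :: "complex poly"
  assumes PQ: "P = smult a ((Q - [:y:]) ^ r)" and r: "r \<ge> 2" and dQ: "degree Q \<ge> 1"
    and Px: "P - [:y:] = smult d ([:-x, 1:] ^ M)" and d: "d \<noteq> 0" and M: "M \<ge> 2"
  shows "y = 0"
proof -
  obtain z where z: "poly (Q - [:y:]) z = 0"
    using poly_root_exists[of "Q - [:y:]"] dQ by (auto simp: degree_minus_const)
  have "poly (pderiv P) z = 0"
    unfolding PQ pderiv_smult pderiv_power using z r by simp
  moreover have "pderiv P = smult d (smult (of_nat M) ([:-x, 1:] ^ (M - 1)))"
  proof -
    have "pderiv P = pderiv (P - [:y:])" by (simp add: pderiv_diff)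
    then show ?thesis unfolding Px pderiv_smult pderiv_power by (simp add: pderiv_pCons)
  qed
  ultimately have "z = x" using d M by simp
  have "poly P z = 0" unfolding PQ using z r by simp
  moreover have "poly (P - [:y:]) z = 0" unfolding Px \<open>z = x\<close> using M by simp
  ultimately show "y = 0" by simp
qed

lemma composite_power_of_linear:
  fixes g P \<Lambda> :: "complex poly"
  assumes dg: "degree g \<ge> 1" and dP: "degree P \<ge> 1" and d\<Lambda>: "degree \<Lambda> = 1"
    and gP: "pcompose g P = \<Lambda> ^ N"
  shows "\<exists>x0 y0 c d. c \<noteq> 0 \<and> d \<noteq> 0 \<and> g = smult c ([:-y0, 1:] ^ degree g)
           \<and> P - [:y0:] = smult d ([:-x0, 1:] ^ degree P)"
proof -
  obtain e k where \<Lambda>: "\<Lambda> = [:e, k:]" and k: "k \<noteq> 0" using linear_poly_cases[OF d\<Lambda>] by blast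
  define x0 where "x0 = - e / k"
  have \<Lambda>_root: "poly \<Lambda> z = 0 \<longleftrightarrow> z = x0" for z
  proof -
    have "poly \<Lambda> z = k * (z - x0)" unfolding \<Lambda> x0_def using k by (simp add: field_simps)
    then show ?thesis using k by simp
  qed
  have roots: "z = x0" if "poly g (poly P z) = 0" for z
    using arg_cong[OF gP, of "\<lambda>p. poly p z"] that \<Lambda>_root by (simp add: poly_pcompose)
  define y0 c where "y0 = poly P x0" and "c = lead_coeff g"
  have "g \<noteq> 0" using dg by auto
  then have gform: "g = smult c ([:-y0, 1:] ^ degree g)" and c: "c \<noteq> 0"
    using single_root_through_pcompose[OF dP _ roots] unfolding y0_def c_def by auto
  have dPy: "degree (P - [:y0:]) = degree P" using dP by (simp add: degree_minus_const)
  then have Py0: "P - [:y0:] \<noteq> 0" using dP by auto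
  define d where "d = coeff (P - [:y0:]) (degree P)"
  have d: "d \<noteq> 0" unfolding d_def using Py0 dPy by (metis leading_coeff_0_iff)
  have "z = x0" if "poly (P - [:y0:]) (poly [:0, 1:] z) = 0" for z
  proof (rule roots)
    have "poly P z = y0" using that by simp
    then show "poly g (poly P z) = 0" using dg by (subst gform) simp
  qed
  from single_root_through_pcompose[of "[:0, 1:]", OF _ Py0 this]
  have "P - [:y0:] = smult (lead_coeff (P - [:y0:])) ([:-x0, 1:] ^ degree (P - [:y0:]))"
    by simp
  then have "P - [:y0:] = smult d ([:-x0, 1:] ^ degree P)"
    unfolding dPy d_def .
  with gform c d show ?thesis by blast
qed

text \<open>Write g^n = g \<circ> P with P = g \<circ> Q; then g = c (X - y0)^r and P - y0 = d (X - x0)^M,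
  and a critical point argument gives y0 = 0.\<close>
lemma power_iterate_normalized:
  fixes g \<Lambda> :: "complex poly"
  assumes dg: "degree g = r" "r \<ge> 2" and n2: "n \<ge> 2" and d\<Lambda>: "degree \<Lambda> = 1"
    and H: "piter n g = \<Lambda> ^ (r ^ n)"
  shows "\<exists>\<alpha>. \<alpha> \<noteq> 0 \<and> g = monom \<alpha> r"
proof -
  define m where "m = n - 2"
  have m: "n = Suc (Suc m)" using n2 unfolding m_def by simp
  define P Q where "P = piter (Suc m) g" and "Q = piter m g"
  have gP: "pcompose g P = \<Lambda> ^ (r ^ n)" using H unfolding m P_def by (simp add: piter_Suc)
  have PQ: "P = pcompose g Q" unfolding P_def Q_def by (rule piter_Suc)
  have dQ: "degree Q \<ge> 1" unfolding Q_def degree_piter using dg by simp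
  have dP: "degree P \<ge> 2" unfolding PQ degree_pcompose using mult_le_mono[OF dg(2) dQ] dg by simp
  obtain x0 y0 c d where c: "c \<noteq> 0" and d: "d \<noteq> 0" and gform: "g = smult c ([:-y0, 1:] ^ r)"
      and Pform: "P - [:y0:] = smult d ([:-x0, 1:] ^ degree P)"
    using composite_power_of_linear[OF _ _ d\<Lambda> gP] dg dP by auto
  have "P = smult c ((Q - [:y0:]) ^ r)"
    unfolding PQ by (subst gform) (simp add: pcompose_smult pcompose_power pcompose_pCons diff_conv_add_uminus add.commute)
  from power_form_critical_point[OF this dg(2) dQ Pform d] have "y0 = 0" using dP by simp
  then have "g = monom c r" using gform by (simp add: monom_altdef)
  then show ?thesis using c by blast
qed

section \<open>Iterates equal to a twisted Chebyshev polynomial\<close>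

text \<open>Outer rigidity applied to g \<circ> g^(n-1) and g^(n-1) \<circ> g, together with inner
  rigidity, produces a linear relation between two twists of T_M, M = r^(n-1) \<ge> 3.\<close>
lemma chebT_iterate_sign:
  fixes g \<Lambda> :: "complex poly"
  assumes dg: "degree g = r" "r \<ge> 2" and n2: "n \<ge> 2" and rn: "(r, n) \<noteq> (2, 2)"
    and d\<Lambda>: "degree \<Lambda> = 1" and H: "piter n g = pcompose (chebT (r ^ n)) \<Lambda>"
  shows "\<exists>s. s\<^sup>2 = 1 \<and> g = smult s (chebT r)"
proof -
  define m where "m = n - 1"
  have nS: "n = Suc m" using n2 unfolding m_def by simp
  define M G where "M = r ^ m" and "G = piter m g"
  have gG: "pcompose g G = pcompose (chebT (r ^ n)) \<Lambda>"
    using H unfolding nS G_def piter_Suc .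
  have Gg: "pcompose G g = pcompose (chebT (r ^ n)) \<Lambda>"
    using H unfolding nS G_def piter_Suc' .
  have dG: "degree G = M" unfolding G_def M_def degree_piter dg ..
  have M3: "M \<ge> 3"
  proof (cases "m = 1")
    case True
    then show ?thesis using rn dg nS unfolding M_def by auto
  next
    case False
    then have "r ^ 2 \<le> r ^ m" using dg n2 nS by (intro power_increasing) auto
    moreover have "2 ^ 2 \<le> r ^ 2" using dg by (intro power_mono) auto
    ultimately show ?thesis unfolding M_def by simp
  qed
  have r1: "r \<ge> 1" "degree g \<ge> 1" and M1: "M \<ge> 1" "degree G \<ge> 1" using dg M3 dG by auto
  obtain \<mu> \<sigma> where d\<mu>: "degree \<mu> = 1" and \<sigma>: "\<sigma>\<^sup>2 = 1" and g\<mu>: "g = smult \<sigma> (pcompose (chebT r) \<mu>)"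
    using chebT_decomp_outer[OF d\<Lambda> dg(1) r1(1) M1(2) gG] sign_cases by metis
  obtain \<tau> where \<tau>: "\<tau>\<^sup>2 = 1" and \<mu>G: "pcompose \<mu> G = smult \<tau> (pcompose (chebT M) \<Lambda>)"
    using chebT_decomp_inner[OF d\<Lambda> d\<mu> r1(1) dG M1(1) \<sigma>] gG g\<mu> sign_cases by metis
  obtain \<nu> \<rho> where d\<nu>: "degree \<nu> = 1" and \<rho>: "\<rho>\<^sup>2 = 1" and G\<nu>: "G = smult \<rho> (pcompose (chebT M) \<nu>)"
    using chebT_decomp_outer[OF d\<Lambda> dG M1(1) r1(2) Gg] sign_cases by metis
  have "\<mu> = [:0, 1:] \<or> \<mu> = [:0, -1:]"
    using linear_relation_chebT[OF M3 d\<mu> d\<nu> d\<Lambda> \<rho> \<tau>] \<mu>G G\<nu> by simp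
  then obtain \<delta> where \<delta>: "\<delta> = 1 \<or> \<delta> = -1" and "\<mu> = [:0, \<delta>:]" by blast
  then have "g = smult (\<sigma> * \<delta> ^ r) (chebT r)" using g\<mu> chebT_scale_sign[OF \<delta>] by simp
  moreover have "(\<sigma> * \<delta> ^ r)\<^sup>2 = 1"
    using \<sigma> \<delta> by (auto simp: power_mult_distrib simp flip: power_mult)
  ultimately show ?thesis by blast
qed

text \<open>Normalized Chebyshev case: g = T_r(\<plusminus>X).  The sign -T_r is a twist of T_r
  unless r is even, and for even r it would give g^n = -T_(r^n).\<close>
lemma chebT_iterate_normalized:
  fixes g \<Lambda> :: "complex poly"
  assumes dg: "degree g = r" "r \<ge> 2" and n2: "n \<ge> 2" and rn: "(r, n) \<noteq> (2, 2)"
    and d\<Lambda>: "degree \<Lambda> = 1" and H: "piter n g = pcompose (chebT (r ^ n)) \<Lambda>"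
  shows "\<exists>\<epsilon>\<in>{1, -1}. g = pcompose (chebT r) [:0, \<epsilon>:]"
proof -
  obtain s where "s\<^sup>2 = 1" and gs: "g = smult s (chebT r)"
    using chebT_iterate_sign[OF assms] by blast
  then consider "s = 1" | "s = -1" "odd r" | "s = -1" "even r" by (auto simp: power2_eq_1_iff)
  then show ?thesis
  proof cases
    case 1
    then show ?thesis using gs by auto
  next
    case 2
    then show ?thesis using gs chebT_scale_sign[of "-1" r] by (intro bexI[of _ "-1"]) auto
  next
    case 3
    have "r ^ 2 \<le> r ^ n" using dg n2 by (intro power_increasing) auto
    moreover have "2 ^ 2 \<le> r ^ 2" using dg by (intro power_mono) auto
    ultimately have N3: "r ^ n \<ge> 3" by simp
    have "piter n g = - chebT (r ^ n)"
      using piter_neg_chebT[OF 3(2), of "n - 1"] gs 3(1) n2 by (simp add: Suc_diff_le)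
    then have "pcompose (chebT (r ^ n)) \<Lambda> = - chebT (r ^ n)" using H by simp
    moreover have "even (r ^ n)" using 3(2) n2 by simp
    ultimately show ?thesis using chebT_twist_ne_neg[OF N3 _ d\<Lambda>] by blast
  qed
qed

lemma pcompose_monom_1: "pcompose (monom 1 k) q = q ^ k" for q :: "complex poly"
  by (simp add: monom_altdef pcompose_power)

lemma power_iterate_rigid:
  fixes f l lh :: "complex poly"
  assumes "degree f > 1" and dl: "degree l = 1" and "degree lh = 1" and "n \<ge> 2"
    and H: "piter n f = pcompose l (pcompose (monom 1 (degree f ^ n)) lh)"
  shows "\<exists>\<alpha>. \<alpha> \<noteq> 0 \<and> f = pcompose l (pcompose (monom \<alpha> (degree f)) (linv l))"
proof -
  define g where "g = pcompose (linv l) (pcompose f l)"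
  note conj = linear_conjugate[OF dl, where f = f, folded g_def]
  have "piter n g = (pcompose lh l) ^ (degree f ^ n)"
    using conj(3)[OF H] by (simp add: pcompose_monom_1)
  moreover have "degree (pcompose lh l) = 1" using assms by (simp add: degree_pcompose)
  moreover have "degree f \<ge> 2" using assms(1) by simp
  ultimately obtain \<alpha> where "\<alpha> \<noteq> 0" "g = monom \<alpha> (degree f)"
    using power_iterate_normalized[OF conj(1) _ \<open>n \<ge> 2\<close>] by blast
  then show ?thesis using conj(2) by blast
qed

lemma chebT_iterate_rigid:
  fixes f l lh :: "complex poly"
  assumes "degree f > 1" and dl: "degree l = 1" and "degree lh = 1" and "n \<ge> 2"
    and H: "piter n f = pcompose l (pcompose (cheb (degree f ^ n)) lh)"
    and rn: "(degree f, n) \<noteq> (2, 2)"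
  shows "\<exists>\<epsilon>\<in>{1, -1}. f = pcompose l (pcompose (cheb (degree f)) (smult \<epsilon> (linv l)))"
proof -
  define g where "g = pcompose (linv l) (pcompose f l)"
  note conj = linear_conjugate[OF dl, where f = f, folded g_def]
  have Hg: "piter n g = pcompose (chebT (degree f ^ n)) (pcompose lh l)"
    using conj(3)[OF H] by (simp add: cheb_eq_chebT)
  have dL: "degree (pcompose lh l) = 1" using assms by (simp add: degree_pcompose)
  have r2: "degree f \<ge> 2" using assms(1) by simp
  obtain \<epsilon> where \<epsilon>: "\<epsilon> \<in> {1, -1}" and g: "g = pcompose (chebT (degree f)) [:0, \<epsilon>:]"
    using chebT_iterate_normalized[OF conj(1) r2 \<open>n \<ge> 2\<close> rn dL Hg] by blast
  have "f = pcompose l (pcompose g (linv l))" by (rule conj(2))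
  also have "pcompose g (linv l) = pcompose (chebT (degree f)) (pcompose [:0, \<epsilon>:] (linv l))"
    unfolding g by (simp add: pcompose_assoc)
  also have "pcompose [:0, \<epsilon>:] (linv l) = smult \<epsilon> (linv l)" by (simp add: pcompose_linear)
  finally show ?thesis unfolding cheb_eq_chebT using \<epsilon> by blast
qed

theorem mainTheorem6:
  fixes f l lh :: "complex poly" and n :: nat
  assumes "degree f > 1" and "degree l = 1" and "degree lh = 1" and "n \<ge> 2"
  shows "(piter n f = pcompose l (pcompose (monom 1 (degree f ^ n)) lh) \<longrightarrow>
            (\<exists>\<alpha>. \<alpha> \<noteq> 0 \<and> f = pcompose l (pcompose (monom \<alpha> (degree f)) (linv l))))
       \<and> (piter n f = pcompose l (pcompose (cheb (degree f ^ n)) lh) \<and> (degree f, n) \<noteq> (2, 2) \<longrightarrow>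
            (\<exists>\<epsilon>\<in>{1, -1}. f = pcompose l (pcompose (cheb (degree f)) (smult \<epsilon> (linv l)))))"
  using power_iterate_rigid[OF assms] chebT_iterate_rigid[OF assms] by blast

end
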